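(* For all complex $q$ with $|q|<1$, $$F^{\rm ed}_{\rm od}(-q)=-\frac{q\,(q;q)_\infty(-q^2;q^2)_\infty}{(q^2;q^2)_\infty^2}\sum_{n=0}^\infty\sum_{m=0}^\infty(-1)^m q^{\frac{n(n+3)}{2}+2nm+2m^2+2m}\left(1+q^{2m+1}\right).$$
   Context: For $n\in\mathbb N_0\cup\{\infty\}$, $(a;q)_n:=\prod_{j=0}^{n-1}(1-aq^j)$. Define $$F^{\rm ed}_{\rm od}(q):=\sum_{n=0}^\infty q^{2n+1}(-q;q^2)_n(-q^{2n+2};q^2)_\infty,$$ and $F^{\rm ed}_{\rm od}(-q)$ denotes this function evaluated at $-q$. *)

theory Defs
  imports "HOL-Analysis.Analysis"
begin

definition qpoch :: "complex \<Rightarrow> complex \<Rightarrow> nat \<Rightarrow> complex" where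
  "qpoch a q n = (\<Prod>j<n. 1 - a * q ^ j)"

definition qpoch_inf :: "complex \<Rightarrow> complex \<Rightarrow> complex" where
  "qpoch_inf a q = (\<Prod>j. 1 - a * q ^ j)"

definition F_ed_od :: "complex \<Rightarrow> complex" where
  "F_ed_od q = (\<Sum>n. q ^ (2*n+1) * qpoch (-q) (q^2) n * qpoch_inf (- (q ^ (2*n+2))) (q^2))"

end

theory Submission
  imports Defs
begin

text \<open>
  Write X = (q;q^2)_inf, Y = (q^2;q^2)_inf and W = (-q^2;q^2)_inf.
  The series defining F(-q) telescopes, giving (1 + q) F(-q) = -q (2W - X).
  Multiplying the double sum S by 1 + q and shifting n by 2 telescopes it row by row, leaving
  (1 + q) S = 2 sum_{j>=0} q^(j(j+1)/2) - sum_{j in Z} (-1)^j q^(2j^2).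
  By the Jacobi triple product, obtained from its finite form (a consequence of the q-binomial
  theorem) by Tannery's theorem, these two series equal Y/X and Y/W; since (q;q)_inf = XY,
  both sides of the identity equal -q (2W - X) / (1 + q).
\<close>

section \<open>q-Pochhammer symbols\<close>

lemma qpoch_0 [simp]: "qpoch a b 0 = 1"
  by (simp add: qpoch_def)

lemma qpoch_Suc: "qpoch a b (Suc n) = qpoch a b n * (1 - a * b ^ n)"
  by (simp add: qpoch_def)

lemma qpoch_add: "qpoch a b (n + m) = qpoch a b n * qpoch (a * b ^ n) b m"
  by (induction m) (simp_all add: qpoch_Suc power_add mult.assoc)

lemma qpoch_even_odd: "qpoch a b (2 * n) = qpoch a (b^2) n * qpoch (a * b) (b^2) n"
proof (induction n)
  case (Suc n)
  have "qpoch a b (2 * Suc n) = qpoch a b (2 * n) * (1 - a * b ^ (2 * n)) * (1 - a * b ^ Suc (2 * n))"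
    by (simp add: qpoch_Suc)
  moreover have "b ^ (2 * n) = (b^2) ^ n" "b ^ Suc (2 * n) = b * (b^2) ^ n"
    by (simp_all add: power_mult)
  ultimately show ?case
    unfolding Suc qpoch_Suc by (simp add: algebra_simps)
qed simp

lemma qpoch_times_qpoch_uminus: "qpoch a b n * qpoch (-a) b n = qpoch (a^2) (b^2) n"
proof (induction n)
  case (Suc n)
  have "qpoch a b (Suc n) * qpoch (-a) b (Suc n)
      = (qpoch a b n * qpoch (-a) b n) * ((1 - a * b ^ n) * (1 + a * b ^ n))"
    by (simp add: qpoch_Suc algebra_simps)
  moreover have "(b^2) ^ n = b ^ n * b ^ n"
    by (simp add: power2_eq_square power_mult_distrib)
  ultimately show ?case
    unfolding Suc qpoch_Suc by (simp add: algebra_simps power2_eq_square)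
qed simp

lemma qpoch_nonzero:
  assumes "norm b \<le> 1" "norm a < 1"
  shows "qpoch a b n \<noteq> 0"
proof -
  have "norm (a * b ^ i) < 1" for i
  proof -
    have "norm (a * b ^ i) \<le> norm a"
      using assms by (simp add: norm_mult norm_power mult_left_le power_le_one)
    then show ?thesis
      using assms by linarith
  qed
  then have "1 - a * b ^ i \<noteq> 0" for i
    by (metis eq_iff_diff_eq_0 norm_one order.irrefl)
  then show ?thesis
    by (simp add: qpoch_def)
qed

lemma convergent_prod_qpoch:
  fixes a b :: complex
  assumes "norm b < 1"
  shows "convergent_prod (\<lambda>j. 1 - a * b ^ j)"
proof -
  have "summable (\<lambda>j. norm a * norm b ^ j)"
    using assms by (intro summable_mult summable_geometric) auto
  moreover have "(\<lambda>j. norm ((1 - a * b ^ j) - 1)) = (\<lambda>j. norm a * norm b ^ j)"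
    by (simp add: norm_mult norm_power)
  ultimately have "summable (\<lambda>j. norm ((1 - a * b ^ j) - 1))"
    by simp
  then show ?thesis
    by (intro abs_convergent_prod_imp_convergent_prod summable_imp_abs_convergent_prod)
qed

lemma qpoch_LIMSEQ:
  assumes "norm b < 1"
  shows "(\<lambda>n. qpoch a b n) \<longlonglongrightarrow> qpoch_inf a b"
proof -
  have "(\<lambda>n. \<Prod>j\<le>n. 1 - a * b ^ j) \<longlonglongrightarrow> qpoch_inf a b"
    unfolding qpoch_inf_def by (rule convergent_prod_LIMSEQ[OF convergent_prod_qpoch[OF assms]])
  then have "(\<lambda>n. qpoch a b (Suc n)) \<longlonglongrightarrow> qpoch_inf a b"
    by (simp add: qpoch_def lessThan_Suc_atMost)
  then show ?thesis
    by (simp add: filterlim_sequentially_Suc)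
qed

lemma qpoch_inf_nonzero:
  assumes "norm b < 1" "norm a < 1"
  shows "qpoch_inf a b \<noteq> 0"
  unfolding qpoch_inf_def
proof (rule prodinf_nonzero[OF convergent_prod_qpoch[OF assms(1)]])
  fix i
  show "1 - a * b ^ i \<noteq> 0"
    using qpoch_nonzero[of b a "Suc i"] assms by (simp add: qpoch_Suc)
qed

lemma qpoch_inf_split:
  assumes "norm b < 1"
  shows "qpoch_inf a b = qpoch a b n * qpoch_inf (a * b ^ n) b"
proof -
  have "(\<lambda>m. qpoch a b (m + n)) \<longlonglongrightarrow> qpoch_inf a b"
    by (rule LIMSEQ_ignore_initial_segment[OF qpoch_LIMSEQ[OF assms]])
  moreover have "(\<lambda>m. qpoch a b (m + n)) \<longlonglongrightarrow> qpoch a b n * qpoch_inf (a * b ^ n) b"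
    unfolding add.commute[of _ n] qpoch_add
    by (intro tendsto_mult tendsto_const qpoch_LIMSEQ assms)
  ultimately show ?thesis
    by (rule LIMSEQ_unique)
qed

lemma norm_power2_less_1: "norm (b::complex) < 1 \<Longrightarrow> norm (b^2) < 1"
  by (simp add: norm_power abs_square_less_1)

lemma qpoch_inf_even_odd:
  assumes "norm b < 1"
  shows "qpoch_inf a b = qpoch_inf a (b^2) * qpoch_inf (a * b) (b^2)"
proof -
  have "((\<lambda>n. qpoch a b n) \<circ> (\<lambda>n. 2 * n)) \<longlonglongrightarrow> qpoch_inf a b"
    by (rule LIMSEQ_subseq_LIMSEQ[OF qpoch_LIMSEQ[OF assms]]) (simp add: strict_mono_def)
  moreover have "((\<lambda>n. qpoch a b n) \<circ> (\<lambda>n. 2 * n)) \<longlonglongrightarrow> qpoch_inf a (b^2) * qpoch_inf (a * b) (b^2)"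
    unfolding o_def qpoch_even_odd
    by (intro tendsto_mult qpoch_LIMSEQ norm_power2_less_1 assms)
  ultimately show ?thesis
    by (rule LIMSEQ_unique)
qed

lemma qpoch_inf_times_qpoch_inf_uminus:
  assumes "norm b < 1"
  shows "qpoch_inf a b * qpoch_inf (-a) b = qpoch_inf (a^2) (b^2)"
proof -
  have "(\<lambda>n. qpoch a b n * qpoch (-a) b n) \<longlonglongrightarrow> qpoch_inf a b * qpoch_inf (-a) b"
    by (intro tendsto_mult qpoch_LIMSEQ assms)
  moreover have "(\<lambda>n. qpoch a b n * qpoch (-a) b n) \<longlonglongrightarrow> qpoch_inf (a^2) (b^2)"
    unfolding qpoch_times_qpoch_uminus by (intro qpoch_LIMSEQ norm_power2_less_1 assms)
  ultimately show ?thesis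
    by (rule LIMSEQ_unique)
qed

text \<open>Euler's identity: partitions into odd parts and into distinct parts are equinumerous.\<close>
lemma qpoch_inf_odd_times_qpoch_inf_uminus:
  assumes "norm b < 1"
  shows "qpoch_inf b (b^2) * qpoch_inf (-b) b = 1"
proof -
  have "qpoch_inf (b^2) (b^2) * (qpoch_inf b (b^2) * qpoch_inf (-b) b) = qpoch_inf (b^2) (b^2)"
    using qpoch_inf_even_odd[OF assms, of b] qpoch_inf_times_qpoch_inf_uminus[OF assms, of b]
    by (simp add: power2_eq_square ac_simps)
  moreover have "qpoch_inf (b^2) (b^2) \<noteq> 0"
    using assms by (intro qpoch_inf_nonzero norm_power2_less_1)
  ultimately show ?thesis
    by simp
qed

section \<open>The Jacobi triple product\<close>

fun tri :: "nat \<Rightarrow> nat" where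
  "tri 0 = 0"
| "tri (Suc k) = tri k + k"

lemma two_tri_add: "2 * tri k + k = k * k"
  by (induction k) (simp_all add: algebra_simps)

lemma tri_Suc_add_tri_add: "tri (Suc N) + tri (N + j) = N * (N + j) + tri j"
proof -
  have "2 * (tri (Suc N) + tri (N + j)) = 2 * (N * (N + j) + tri j)"
    using two_tri_add[of N] two_tri_add[of "N + j"] two_tri_add[of j] by (simp add: algebra_simps)
  then show ?thesis
    by simp
qed

lemma tri_add_Suc_add_tri: "tri (k + j + 2) + tri k = (k + j + 1) * k + tri (j + 2)"
proof -
  have "2 * (tri (k + j + 2) + tri k) = 2 * ((k + j + 1) * k + tri (j + 2))"
    using two_tri_add[of k] two_tri_add[of "k + j + 1"] two_tri_add[of j] by (simp add: algebra_simps)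
  then show ?thesis
    by simp
qed

lemma sum_atMost_add_split:
  fixes f :: "nat \<Rightarrow> 'a::comm_monoid_add"
  shows "(\<Sum>k\<le>N + M. f k) = (\<Sum>k<N. f k) + (\<Sum>j\<le>M. f (N + j))"
  by (induction M) (simp_all add: lessThan_Suc_atMost[symmetric] add.assoc)

lemma qpoch_reflect:
  assumes "b \<noteq> 0" "z \<noteq> 0"
  shows "qpoch (-(z / b ^ N)) b N * b ^ tri (Suc N) = z ^ N * qpoch (-b / z) b N"
proof (induction N)
  case (Suc N)
  have last_factor: "(1 + z / b ^ Suc N) * b ^ Suc N = z * (1 + b / z * b ^ N)"
    using assms by (simp add: field_simps)
  have "qpoch (-(z / b ^ Suc N)) b (Suc N) * b ^ tri (Suc (Suc N))
      = (qpoch (-(z / b ^ N)) b N * b ^ tri (Suc N)) * ((1 + z / b ^ Suc N) * b ^ Suc N)"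
    using qpoch_add[of "-(z / b ^ Suc N)" b 1 N] assms
    by (simp only: tri.simps(2)[of "Suc N"] power_add) (simp add: qpoch_Suc ac_simps)
  also have "\<dots> = z ^ Suc N * qpoch (-b / z) b (Suc N)"
    unfolding Suc last_factor by (simp add: qpoch_Suc ac_simps)
  finally show ?case .
qed simp

text \<open>Re-indexing the terms of \<open>(-z/b\<^sup>N; b)\<^sub>2\<^sub>N\<close> around the middle index \<open>N\<close>.\<close>
lemma recentred_monomials:
  fixes b z :: complex
  assumes "b \<noteq> 0" "z \<noteq> 0"
  shows "b ^ tri (Suc N) / z ^ N * (b ^ tri (N + j) * (z / b ^ N) ^ (N + j)) = b ^ tri j * z ^ j"
    and "j < N \<Longrightarrow> b ^ tri (Suc N) / z ^ N * (b ^ tri (N - Suc j) * (z / b ^ N) ^ (N - Suc j))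
      = b ^ tri (j + 2) / z ^ (j + 1)"
proof -
  have "b ^ tri (Suc N) / z ^ N * (b ^ tri (N + j) * (z / b ^ N) ^ (N + j))
      = (b ^ tri (Suc N) * b ^ tri (N + j)) * (z ^ N * z ^ j) / (b ^ (N * (N + j)) * z ^ N)"
    by (simp add: power_divide power_mult power_add)
  also have "b ^ tri (Suc N) * b ^ tri (N + j) = b ^ (N * (N + j)) * b ^ tri j"
    by (simp only: power_add[symmetric] tri_Suc_add_tri_add)
  finally show "b ^ tri (Suc N) / z ^ N * (b ^ tri (N + j) * (z / b ^ N) ^ (N + j)) = b ^ tri j * z ^ j"
    using assms by simp
next
  assume "j < N"
  define k where "k = N - Suc j"
  have N: "N = k + j + 1"
    using \<open>j < N\<close> by (simp add: k_def)
  have "b ^ tri (Suc N) / z ^ N * (b ^ tri k * (z / b ^ N) ^ k)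
      = (b ^ tri (Suc N) * b ^ tri k) * z ^ k / (b ^ (N * k) * z ^ N)"
    by (simp add: power_divide power_mult ac_simps)
  moreover have "tri (Suc N) + tri k = N * k + tri (j + 2)"
    using tri_add_Suc_add_tri[of k j] N by (simp add: ac_simps)
  then have "b ^ tri (Suc N) * b ^ tri k = b ^ (N * k) * b ^ tri (j + 2)"
    by (simp only: power_add[symmetric])
  moreover have "z ^ N = z ^ k * z ^ (j + 1)"
    by (simp add: N power_add)
  ultimately show "b ^ tri (Suc N) / z ^ N * (b ^ tri (N - Suc j) * (z / b ^ N) ^ (N - Suc j))
      = b ^ tri (j + 2) / z ^ (j + 1)"
    using assms by (simp add: k_def[symmetric])
qed

definition qbinom :: "complex \<Rightarrow> nat \<Rightarrow> nat \<Rightarrow> complex" where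
  "qbinom b N k = (if k \<le> N then qpoch b b N / (qpoch b b k * qpoch b b (N - k)) else 0)"

locale qfact_nonzero =
  fixes b :: complex
  assumes qfact_neq_0: "qpoch b b n \<noteq> 0"
begin

lemma qbinom_0 [simp]: "qbinom b N 0 = 1"
  using qfact_neq_0[of N] by (simp add: qbinom_def)

lemma qbinom_eq_0: "N < k \<Longrightarrow> qbinom b N k = 0"
  by (simp add: qbinom_def)

lemma qbinom_Suc_Suc:
  assumes "k \<le> N"
  shows "qbinom b (Suc N) (Suc k) = qbinom b N (Suc k) + b ^ (N - k) * qbinom b N k"
proof (cases "k = N")
  case True
  then show ?thesis
    using qfact_neq_0[of N] qfact_neq_0[of "Suc N"] by (simp add: qbinom_def)
next
  case False
  with assms have "k < N"
    by simp
  then obtain d where N: "N = k + Suc d"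
    using less_imp_Suc_add by fastforce
  define A where "A = b ^ Suc k"
  define D where "D = b ^ Suc d"
  have "1 - A \<noteq> 0" "1 - D \<noteq> 0"
    using qfact_neq_0[of "Suc (Suc k)"] qfact_neq_0[of "Suc (Suc d)"]
    by (simp_all add: A_def D_def qpoch_Suc)
  moreover have "qbinom b (Suc N) (Suc k)
      = qpoch b b N * (1 - D * A) / (qpoch b b k * (1 - A) * (qpoch b b d * (1 - D)))"
    by (simp add: qbinom_def N qpoch_Suc A_def D_def power_add)
  moreover have "qbinom b N (Suc k) + b ^ (N - k) * qbinom b N k
      = qpoch b b N / (qpoch b b k * (1 - A) * qpoch b b d)
        + D * (qpoch b b N / (qpoch b b k * (qpoch b b d * (1 - D))))"
    by (simp add: qbinom_def N qpoch_Suc A_def D_def)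
  moreover have "x * (u + D * a) / (p * a * (r * u)) = x / (p * a * r) + D * (x / (p * (r * u)))"
    if "a \<noteq> 0" "u \<noteq> 0" "p \<noteq> 0" "r \<noteq> 0" for x u a p r :: complex
    using that by (simp add: field_simps)
  moreover have "1 - D * A = (1 - D) + D * (1 - A)"
    by (simp add: algebra_simps)
  ultimately show ?thesis
    using qfact_neq_0[of k] qfact_neq_0[of d] by metis
qed

theorem q_binomial: "qpoch (-z) b N = (\<Sum>k\<le>N. qbinom b N k * b ^ tri k * z ^ k)"
proof (induction N)
  case (Suc N)
  define R where "R = (\<Sum>k\<le>N. qbinom b N k * b ^ tri k * z ^ k)"
  have upper: "(\<Sum>k\<le>N. qbinom b N (Suc k) * b ^ tri (Suc k) * z ^ Suc k) = R - 1"
  proof -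
    have "R = (\<Sum>k\<le>Suc N. qbinom b N k * b ^ tri k * z ^ k)"
      unfolding R_def by (simp add: qbinom_eq_0)
    also have "\<dots> = 1 + (\<Sum>k\<le>N. qbinom b N (Suc k) * b ^ tri (Suc k) * z ^ Suc k)"
      by (subst sum.atMost_Suc_shift) simp
    finally show ?thesis
      by simp
  qed
  have lower: "(\<Sum>k\<le>N. b ^ (N - k) * qbinom b N k * b ^ tri (Suc k) * z ^ Suc k) = z * b ^ N * R"
    unfolding R_def sum_distrib_left
  proof (rule sum.cong)
    fix k
    assume "k \<in> {..N}"
    then have "N - k + (tri k + k) = N + tri k"
      by simp
    then have "b ^ (N - k) * b ^ tri (Suc k) = b ^ N * b ^ tri k"
      by (simp add: power_add[symmetric])
    then show "b ^ (N - k) * qbinom b N k * b ^ tri (Suc k) * z ^ Suc k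
        = z * b ^ N * (qbinom b N k * b ^ tri k * z ^ k)"
      by (simp only: power_Suc mult_ac)
  qed simp
  have "(\<Sum>k\<le>Suc N. qbinom b (Suc N) k * b ^ tri k * z ^ k)
      = 1 + (\<Sum>k\<le>N. qbinom b (Suc N) (Suc k) * b ^ tri (Suc k) * z ^ Suc k)"
    by (subst sum.atMost_Suc_shift) simp
  also have "\<dots> = 1 + (\<Sum>k\<le>N. qbinom b N (Suc k) * b ^ tri (Suc k) * z ^ Suc k
                     + b ^ (N - k) * qbinom b N k * b ^ tri (Suc k) * z ^ Suc k)"
    by (intro arg_cong[where f="\<lambda>x. 1 + x"] sum.cong refl) (simp only: atMost_iff qbinom_Suc_Suc distrib_right)
  also have "\<dots> = R + z * b ^ N * R"
    unfolding sum.distrib upper lower by simp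
  also have "\<dots> = qpoch (-z) b (Suc N)"
    by (simp add: qpoch_Suc Suc.IH[folded R_def] algebra_simps)
  finally show ?case
    by simp
qed simp

lemma finite_triple_product:
  assumes "b \<noteq> 0" "z \<noteq> 0"
  shows "qpoch (-z) b N * qpoch (-b / z) b N
    = (\<Sum>j\<le>N. qbinom b (2 * N) (N + j) * (b ^ tri j * z ^ j))
    + (\<Sum>j<N. qbinom b (2 * N) (N - Suc j) * (b ^ tri (j + 2) / z ^ (j + 1)))"
proof -
  define w where "w = z / b ^ N"
  define X where "X = b ^ tri (Suc N) / z ^ N"
  define t where "t k = qbinom b (2 * N) k * (b ^ tri k * w ^ k)" for k
  have Xt: "X * t k = qbinom b (2 * N) k * (X * (b ^ tri k * w ^ k))" for k
    by (simp only: t_def ac_simps)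
  have "qpoch (-z) b N * qpoch (-b / z) b N = X * qpoch (-w) b (N + N)"
    using qpoch_reflect[OF assms, of N] qpoch_add[of "-w" b N N] assms
    by (simp add: X_def w_def field_simps)
  also have "qpoch (-w) b (N + N) = (\<Sum>k\<le>N + N. t k)"
    by (simp add: q_binomial t_def mult_2 mult.assoc)
  also have "\<dots> = (\<Sum>j\<le>N. t (N + j)) + (\<Sum>j<N. t (N - Suc j))"
    unfolding sum_atMost_add_split sum.nat_diff_reindex by (rule add.commute)
  also have "X * \<dots> = (\<Sum>j\<le>N. qbinom b (2 * N) (N + j) * (b ^ tri j * z ^ j))
    + (\<Sum>j<N. qbinom b (2 * N) (N - Suc j) * (b ^ tri (j + 2) / z ^ (j + 1)))"
    unfolding distrib_left sum_distrib_left Xt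
    by (intro arg_cong2[where f="(+)"] sum.cong refl)
      (simp_all only: atMost_iff lessThan_iff recentred_monomials[OF assms, where N = N, folded X_def w_def])
  finally show ?thesis .
qed

end

lemma qfact_nonzero_disc: "norm b < 1 \<Longrightarrow> qfact_nonzero b"
  by unfold_locales (simp add: qpoch_nonzero)

lemma qbinom_LIMSEQ:
  assumes b: "norm b < 1"
    and k: "filterlim k at_top sequentially"
    and nk: "filterlim (\<lambda>N. n N - k N) at_top sequentially"
  shows "(\<lambda>N. qbinom b (n N) (k N)) \<longlonglongrightarrow> 1 / qpoch_inf b b"
proof -
  have P: "qpoch_inf b b \<noteq> 0"
    using b by (simp add: qpoch_inf_nonzero)
  have lim: "(\<lambda>N. qpoch b b (f N)) \<longlonglongrightarrow> qpoch_inf b b" if "filterlim f at_top sequentially" for f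
    using filterlim_compose[OF qpoch_LIMSEQ[OF b] that] .
  have "eventually (\<lambda>N. 1 \<le> n N - k N) sequentially"
    using nk by (simp add: filterlim_at_top)
  then have less: "eventually (\<lambda>N. k N < n N) sequentially"
    by (auto elim: eventually_mono)
  then have n: "filterlim n at_top sequentially"
    by (intro filterlim_at_top_mono[OF k]) (auto elim: eventually_mono)
  have "(\<lambda>N. qpoch b b (n N) / (qpoch b b (k N) * qpoch b b (n N - k N)))
      \<longlonglongrightarrow> qpoch_inf b b / (qpoch_inf b b * qpoch_inf b b)"
    using P by (intro tendsto_divide tendsto_mult lim k n nk) simp
  moreover have "eventually (\<lambda>N. qpoch b b (n N) / (qpoch b b (k N) * qpoch b b (n N - k N))
      = qbinom b (n N) (k N)) sequentially"
    using less by eventually_elim (simp add: qbinom_def)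
  ultimately show ?thesis
    using P by (auto intro: Lim_transform_eventually)
qed

lemma qbinom_central_LIMSEQ:
  assumes "norm b < 1"
  shows "(\<lambda>N. qbinom b (2 * N) (N + j)) \<longlonglongrightarrow> 1 / qpoch_inf b b"
    and "(\<lambda>N. qbinom b (2 * N) (N - Suc j)) \<longlonglongrightarrow> 1 / qpoch_inf b b"
proof -
  have "(\<lambda>N. 2 * N - (N + j)) = (\<lambda>N. N - j)"
    by auto
  then show "(\<lambda>N. qbinom b (2 * N) (N + j)) \<longlonglongrightarrow> 1 / qpoch_inf b b"
    using assms by (intro qbinom_LIMSEQ filterlim_add_const_nat_at_top)
      (simp_all add: filterlim_minus_const_nat_at_top)
  have "filterlim (\<lambda>N. 2 * N - (N - Suc j)) at_top sequentially"
    by (rule filterlim_at_top_mono[OF filterlim_ident]) (intro always_eventually allI, arith)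
  then show "(\<lambda>N. qbinom b (2 * N) (N - Suc j)) \<longlonglongrightarrow> 1 / qpoch_inf b b"
    using assms by (intro qbinom_LIMSEQ filterlim_minus_const_nat_at_top)
qed

lemma qbinom_bounded:
  assumes "norm b < 1"
  obtains K where "\<And>N k. norm (qbinom b N k) \<le> K"
proof -
  have P: "(\<lambda>n. qpoch b b n) \<longlonglongrightarrow> qpoch_inf b b"
    using assms by (rule qpoch_LIMSEQ)
  obtain K1 where K1: "K1 > 0" "\<And>n. norm (qpoch b b n) \<le> K1"
    using convergent_imp_Bseq[OF convergentI[OF P]] by (auto simp: Bseq_def)
  have "(\<lambda>n. inverse (qpoch b b n)) \<longlonglongrightarrow> inverse (qpoch_inf b b)"
    using assms by (intro tendsto_inverse P) (simp add: qpoch_inf_nonzero)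
  then obtain K2 where K2: "K2 > 0" "\<And>n. norm (inverse (qpoch b b n)) \<le> K2"
    by (metis Bseq_def convergentI convergent_imp_Bseq)
  have "norm (qbinom b N k) \<le> K1 * (K2 * K2)" for N k
  proof (cases "k \<le> N")
    case True
    then have "norm (qbinom b N k)
        = norm (qpoch b b N) * (norm (inverse (qpoch b b k)) * norm (inverse (qpoch b b (N - k))))"
      by (simp add: qbinom_def norm_mult norm_divide divide_inverse)
    also have "\<dots> \<le> K1 * (K2 * K2)"
      using K1 K2 by (intro mult_mono) auto
    finally show ?thesis .
  qed (use K1 K2 in \<open>simp add: qbinom_def\<close>)
  then show ?thesis
    using that by blast
qed

lemma tendsto_suminf_weighted:
  fixes c :: "nat \<Rightarrow> complex" and h :: "nat \<Rightarrow> nat \<Rightarrow> complex"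
  assumes "summable (\<lambda>j. norm (c j))" and "\<And>j. (\<lambda>N. h j N) \<longlonglongrightarrow> L"
    and "\<And>j N. norm (h j N) \<le> K" and "\<And>j. eventually (\<lambda>N. P N j) sequentially"
  shows "(\<lambda>N. \<Sum>j. if P N j then h j N * c j else 0) \<longlonglongrightarrow> L * (\<Sum>j. c j)"
proof -
  have "(\<lambda>N. \<Sum>j. if P N j then h j N * c j else 0) \<longlonglongrightarrow> (\<Sum>j. L * c j)"
  proof (rule tannerys_theorem[where M="\<lambda>j. K * norm (c j)", THEN conjunct2, THEN conjunct2])
    fix j
    have "(\<lambda>N. h j N * c j) \<longlonglongrightarrow> L * c j"
      by (intro tendsto_mult assms tendsto_const)
    moreover have "eventually (\<lambda>N. h j N * c j = (if P N j then h j N * c j else 0)) sequentially"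
      using assms(4)[of j] by eventually_elim simp
    ultimately show "(\<lambda>N. if P N j then h j N * c j else 0) \<longlonglongrightarrow> L * c j"
      by (rule Lim_transform_eventually)
  next
    have "K \<ge> 0"
      using assms(3)[of 0 0] norm_ge_zero order_trans by blast
    then show "eventually (\<lambda>(j, N). norm (if P N j then h j N * c j else 0) \<le> K * norm (c j))
        (at_top \<times>\<^sub>F sequentially)"
      using assms(3) by (intro always_eventually) (auto simp: norm_mult intro: mult_right_mono)
  qed (use assms(1) in \<open>simp_all add: summable_mult\<close>)
  also have "(\<Sum>j. L * c j) = L * (\<Sum>j. c j)"
    using summable_norm_cancel[OF assms(1)] by (rule suminf_mult)
  finally show ?thesis .
qed

theorem jacobi_triple_product:
  assumes b: "norm b < 1" "b \<noteq> 0" and "z \<noteq> 0"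
    and s1: "summable (\<lambda>j. norm (b ^ tri j * z ^ j))"
    and s2: "summable (\<lambda>j. norm (b ^ tri (j + 2) / z ^ (j + 1)))"
  shows "qpoch_inf (-z) b * qpoch_inf (-b / z) b * qpoch_inf b b
    = (\<Sum>j. b ^ tri j * z ^ j) + (\<Sum>j. b ^ tri (j + 2) / z ^ (j + 1))"
proof -
  interpret qfact_nonzero b
    using b(1) by (rule qfact_nonzero_disc)
  obtain K where K: "\<And>N k. norm (qbinom b N k) \<le> K"
    using qbinom_bounded[OF b(1)] by blast
  have upper: "(\<lambda>N. \<Sum>j. if j \<le> N then qbinom b (2 * N) (N + j) * (b ^ tri j * z ^ j) else 0)
      \<longlonglongrightarrow> 1 / qpoch_inf b b * (\<Sum>j. b ^ tri j * z ^ j)"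
    using s1 K qbinom_central_LIMSEQ(1)[OF b(1)]
    by (intro tendsto_suminf_weighted) (auto intro: eventually_ge_at_top)
  have lower: "(\<lambda>N. \<Sum>j. if j < N then qbinom b (2 * N) (N - Suc j) * (b ^ tri (j + 2) / z ^ (j + 1)) else 0)
      \<longlonglongrightarrow> 1 / qpoch_inf b b * (\<Sum>j. b ^ tri (j + 2) / z ^ (j + 1))"
    using s2 K qbinom_central_LIMSEQ(2)[OF b(1)]
    by (intro tendsto_suminf_weighted) (auto intro: eventually_gt_at_top)
  have "(\<lambda>N. qpoch (-z) b N * qpoch (-b / z) b N)
      \<longlonglongrightarrow> 1 / qpoch_inf b b * (\<Sum>j. b ^ tri j * z ^ j)
        + 1 / qpoch_inf b b * (\<Sum>j. b ^ tri (j + 2) / z ^ (j + 1))"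
  proof -
    have "(\<Sum>j. if j \<le> N then f j else 0) = (\<Sum>j\<le>N. f j)"
      "(\<Sum>j. if j < N then f j else 0) = (\<Sum>j<N. f j)" for N and f :: "nat \<Rightarrow> complex"
      by (subst suminf_finite[of "{..N}"] suminf_finite[of "{..<N}"]; simp)+
    then show ?thesis
      using tendsto_add[OF upper lower] by (simp only: finite_triple_product[OF b(2) \<open>z \<noteq> 0\<close>])
  qed
  moreover have "(\<lambda>N. qpoch (-z) b N * qpoch (-b / z) b N) \<longlonglongrightarrow> qpoch_inf (-z) b * qpoch_inf (-b / z) b"
    by (intro tendsto_mult qpoch_LIMSEQ b)
  ultimately have "qpoch_inf (-z) b * qpoch_inf (-b / z) b
      = 1 / qpoch_inf b b * ((\<Sum>j. b ^ tri j * z ^ j) + (\<Sum>j. b ^ tri (j + 2) / z ^ (j + 1)))"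
    by (simp add: LIMSEQ_unique distrib_left)
  then show ?thesis
    using b by (simp add: qpoch_inf_nonzero field_simps)
qed

section \<open>Gauss's triangular series and a theta series\<close>

lemma norm_power_le_norm_power:
  fixes q :: complex
  assumes "norm q < 1" "k \<le> e"
  shows "norm (q ^ e) \<le> norm q ^ k"
  unfolding norm_power using assms by (intro power_decreasing) auto

lemma summable_geometric_dominated:
  fixes g :: "nat \<Rightarrow> complex"
  assumes "norm q < 1" "\<And>m. norm (g m) \<le> norm q ^ m"
  shows "summable (\<lambda>m. norm (g m))" "summable g"
proof -
  show "summable (\<lambda>m. norm (g m))"
    using assms by (intro summable_comparison_test'[OF summable_geometric[of "norm q"]]) auto
  then show "summable g"
    by (rule summable_norm_cancel)
qed

lemma triangular_series_eq:
  fixes q :: complex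
  assumes q: "norm q < 1" "q \<noteq> 0"
  shows "(\<Sum>j. q ^ tri (Suc j)) = qpoch_inf (q^2) (q^2) / qpoch_inf q (q^2)"
proof -
  define E where "E = qpoch_inf (-q) q"
  define X where "X = qpoch_inf q (q^2)"
  define Y where "Y = qpoch_inf (q^2) (q^2)"
  have upper: "q ^ tri j * q ^ j = q ^ tri (Suc j)" for j
    by (simp add: power_add)
  have lower: "q ^ tri (j + 2) / q ^ (j + 1) = q ^ tri (Suc j)" for j
    using q by (simp add: power_add)
  have "norm (q ^ tri (Suc j)) \<le> norm q ^ j" for j
    using q by (intro norm_power_le_norm_power) simp_all
  note summable = summable_geometric_dominated[OF q(1) this]
  have "E * qpoch_inf (-q / q) q * qpoch_inf q q = 2 * (\<Sum>j. q ^ tri (Suc j))"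
    using jacobi_triple_product[OF q(1,2,2), unfolded upper lower, OF summable(1) summable(1)]
    by (simp only: E_def mult_2)
  moreover have "qpoch_inf (-q / q) q = 2 * E"
    using qpoch_inf_split[OF q(1), of "-1" 1] q by (simp add: E_def qpoch_Suc)
  moreover have "qpoch_inf q q = X * Y"
    using qpoch_inf_even_odd[OF q(1), of q] by (simp add: X_def Y_def power2_eq_square)
  ultimately have "(\<Sum>j. q ^ tri (Suc j)) = E * (X * E) * Y"
    by (simp add: ac_simps)
  also have "X * E = 1"
    unfolding X_def E_def by (rule qpoch_inf_odd_times_qpoch_inf_uminus[OF q(1)])
  also have "E = inverse X"
    using \<open>X * E = 1\<close> by (rule inverse_unique[symmetric])
  finally show ?thesis
    by (simp add: X_def Y_def divide_inverse)
qed

lemma theta_terms: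
  fixes q :: complex
  assumes "q \<noteq> 0"
  shows "(q^4) ^ tri j * (-(q^2)) ^ j = (-1) ^ j * q ^ (2 * j * j)"
    and "(q^4) ^ tri (j + 2) / (-(q^2)) ^ (j + 1) = - ((-1) ^ j * q ^ (2 * (j + 1) * (j + 1)))"
proof -
  have "4 * tri j + 2 * j = 2 * j * j"
    using two_tri_add[of j] by (simp add: algebra_simps)
  moreover have "(q^4) ^ tri j * (q^2) ^ j = q ^ (4 * tri j + 2 * j)"
    unfolding power_add power_mult ..
  ultimately have "(q^4) ^ tri j * (q^2) ^ j = q ^ (2 * j * j)"
    by simp
  then show "(q^4) ^ tri j * (-(q^2)) ^ j = (-1) ^ j * q ^ (2 * j * j)"
    by (simp add: power_minus[of "q^2"] mult.assoc)
  have "4 * tri (j + 2) = 2 * (j + 1) * (j + 1) + 2 * (j + 1)"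
    using two_tri_add[of "j + 2"] by (simp add: algebra_simps)
  moreover have "q ^ (2 * (j + 1) * (j + 1) + 2 * (j + 1)) = q ^ (2 * (j + 1) * (j + 1)) * (q^2) ^ (j + 1)"
    unfolding power_add power_mult ..
  ultimately have "(q^4) ^ tri (j + 2) = q ^ (2 * (j + 1) * (j + 1)) * (q^2) ^ (j + 1)"
    by (simp only: power_mult[symmetric])
  moreover have "x / (-1) ^ n = (-1) ^ n * x" for x :: complex and n
    by (cases "even n") auto
  ultimately show "(q^4) ^ tri (j + 2) / (-(q^2)) ^ (j + 1) = - ((-1) ^ j * q ^ (2 * (j + 1) * (j + 1)))"
    using assms by (simp add: power_minus[of "q^2"])
qed

lemma theta_product:
  fixes q :: complex
  assumes q: "norm q < 1" "q \<noteq> 0"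
  shows "qpoch_inf (q^2) (q^4) * qpoch_inf (q^2) (q^4) * qpoch_inf (q^4) (q^4)
    = 1 - 2 * (\<Sum>m. (-1) ^ m * q ^ (2 * (m + 1) * (m + 1)))"
proof -
  define t where "t m = (-1) ^ m * q ^ (2 * (m + 1) * (m + 1))" for m
  have q4: "norm (q^4) < 1" "q^4 \<noteq> 0"
    using q norm_power_le_norm_power[OF q(1), of 1 4] by simp_all
  have "norm ((-1) ^ j * q ^ (2 * j * j)) \<le> norm q ^ j" for j
    using norm_power_le_norm_power[OF q(1), of j "2 * j * j"] by (cases j) (simp_all add: norm_mult norm_power)
  note summable_upper = summable_geometric_dominated[OF q(1) this]
  have "norm (- t j) \<le> norm q ^ j" for j
    using norm_power_le_norm_power[OF q(1), of j "2 * (j + 1) * (j + 1)"] by (simp add: t_def norm_mult norm_power)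
  note summable_lower = summable_geometric_dominated[OF q(1) this]
  have "(\<Sum>j. (-1) ^ j * q ^ (2 * j * j)) = 1 + (\<Sum>j. - t j)"
    using suminf_split_head[OF summable_upper(2)] by (simp add: t_def)
  moreover have "(\<Sum>j. - t j) = - suminf t"
    using summable_lower(2) unfolding summable_minus_iff by (rule suminf_minus)
  moreover have "-(q^4) / -(q^2) = q^2"
    using q by (simp add: field_simps power2_eq_square numeral_eq_Suc)
  ultimately have "qpoch_inf (q^2) (q^4) * qpoch_inf (q^2) (q^4) * qpoch_inf (q^4) (q^4) = 1 - 2 * suminf t"
    using jacobi_triple_product[OF q4(1,2), of "-(q^2)", unfolded theta_terms[OF q(2)] t_def[symmetric],
        OF _ summable_upper(1) summable_lower(1)] q
    by simp
  then show ?thesis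
    unfolding t_def[abs_def] .
qed

lemma theta_series_eq:
  fixes q :: complex
  assumes q: "norm q < 1" "q \<noteq> 0"
  shows "1 - 2 * (\<Sum>m. (-1) ^ m * q ^ (2 * (m + 1) * (m + 1)))
    = qpoch_inf (q^2) (q^2) / qpoch_inf (-(q^2)) (q^2)"
proof -
  define Om where "Om = qpoch_inf (q^2) (q^4)"
  define W where "W = qpoch_inf (-(q^2)) (q^2)"
  define Y where "Y = qpoch_inf (q^2) (q^2)"
  have "1 - 2 * (\<Sum>m. (-1) ^ m * q ^ (2 * (m + 1) * (m + 1))) = Om * Om * qpoch_inf (q^4) (q^4)"
    unfolding Om_def by (rule theta_product[OF q, symmetric])
  also have "qpoch_inf (q^4) (q^4) = Y * W"
    using qpoch_inf_times_qpoch_inf_uminus[of "q^2" "q^2"] q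
    by (simp add: Y_def W_def norm_power2_less_1 power_mult[symmetric])
  also have "Om * Om * (Y * W) = Om * Y * (Om * W)"
    by (simp only: ac_simps)
  also have "Om * W = 1"
    using qpoch_inf_odd_times_qpoch_inf_uminus[of "q^2"] q
    by (simp add: Om_def W_def norm_power2_less_1 power_mult[symmetric])
  also have "Om = inverse W"
    using \<open>Om * W = 1\<close> by (metis inverse_unique mult.commute)
  finally show ?thesis
    by (simp add: Y_def W_def divide_inverse mult.commute)
qed

section \<open>The double sum\<close>

lemma suminf_forward_recurrence:
  fixes f g :: "nat \<Rightarrow> 'a::real_normed_field"
  assumes f: "summable f" and g: "summable g" and rec: "\<And>n. c * f n = g n - f (n + 2)"
  shows "(1 + c) * suminf f = f 0 + f 1 + suminf g"
proof -
  have split: "suminf f = (\<Sum>n. f (n + 2)) + (f 0 + f 1)"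
    using suminf_split_initial_segment[OF f, of 2] by (simp add: numeral_2_eq_2)
  have "c * suminf f = (\<Sum>n. g n - f (n + 2))"
    unfolding rec[symmetric] by (rule suminf_mult[OF f, symmetric])
  also have "\<dots> = suminf g - (\<Sum>n. f (n + 2))"
    using g summable_ignore_initial_segment[OF f] by (rule suminf_diff[symmetric])
  finally show ?thesis
    using split by (simp add: algebra_simps)
qed

lemma suminf_backward_recurrence:
  fixes f g :: "nat \<Rightarrow> 'a::real_normed_field"
  assumes f: "summable f" and g: "summable g" and rec: "\<And>n. c * f (n + 2) = g n - f n"
  shows "(1 + c) * suminf f = c * f 0 + c * f 1 + suminf g"
proof -
  have split: "suminf f = (\<Sum>n. f (n + 2)) + (f 0 + f 1)"
    using suminf_split_initial_segment[OF f, of 2] by (simp add: numeral_2_eq_2)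
  have "c * (\<Sum>n. f (n + 2)) = (\<Sum>n. g n - f n)"
    unfolding rec[symmetric] by (rule suminf_mult[OF summable_ignore_initial_segment[OF f], symmetric])
  also have "\<dots> = suminf g - suminf f"
    using g f by (rule suminf_diff[symmetric])
  finally show ?thesis
    using split by (simp add: algebra_simps)
qed

lemma summable_rows_geometric:
  fixes g :: "nat \<Rightarrow> nat \<Rightarrow> complex"
  assumes q: "norm q < 1" and bound: "\<And>n m. norm (g n m) \<le> norm q ^ (n + m)"
  shows "summable (\<lambda>m. g n m)" "summable (\<lambda>n. \<Sum>m. g n m)"
proof -
  have geometric: "summable (\<lambda>m. norm q ^ m)"
    using q by (intro summable_geometric) simp
  have bound': "norm (g n m) \<le> norm q ^ n * norm q ^ m" for n m
    using bound[of n m] by (simp add: power_add)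
  have rows: "summable (\<lambda>m. norm (g n m))" for n
    using bound' by (intro summable_comparison_test'[OF summable_mult[OF geometric]]) auto
  then show "summable (\<lambda>m. g n m)"
    by (rule summable_norm_cancel)
  have "norm (\<Sum>m. g n m) \<le> norm q ^ n * (\<Sum>m. norm q ^ m)" for n
  proof -
    have "norm (\<Sum>m. g n m) \<le> (\<Sum>m. norm (g n m))"
      by (rule summable_norm[OF rows])
    also have "\<dots> \<le> (\<Sum>m. norm q ^ n * norm q ^ m)"
      by (rule suminf_le[OF bound' rows summable_mult[OF geometric]])
    also have "\<dots> = norm q ^ n * (\<Sum>m. norm q ^ m)"
      by (rule suminf_mult[OF geometric])
    finally show ?thesis .
  qed
  then have "summable (\<lambda>n. norm (\<Sum>m. g n m))"
    by (intro summable_comparison_test'[OF summable_mult2[OF geometric]]) auto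
  then show "summable (\<lambda>n. \<Sum>m. g n m)"
    by (rule summable_norm_cancel)
qed

definition dexp :: "nat \<Rightarrow> nat \<Rightarrow> nat" where
  "dexp n m = n * (n + 3) div 2 + 2 * n * m + 2 * m^2 + 2 * m"

text \<open>Row \<open>n + 2\<close> of the double sum is row \<open>n\<close> shifted by one column: the source of the telescoping.\<close>
lemma dexp_add_2: "dexp (n + 2) m = dexp n (m + 1) + 1"
proof -
  have "(n + 2) * (n + 2 + 3) = n * (n + 3) + 2 * (2 * n + 5)"
    by (simp add: algebra_simps)
  then have "(n + 2) * (n + 2 + 3) div 2 = n * (n + 3) div 2 + (2 * n + 5)"
    by simp
  then show ?thesis
    unfolding dexp_def by (simp add: algebra_simps power2_eq_square)
qed

lemma dexp_ge: "n + m \<le> dexp n m"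
proof -
  have "2 * n \<le> n * (n + 3)"
    by (simp add: algebra_simps)
  then show ?thesis
    unfolding dexp_def by linarith
qed

lemma tri_Suc_Suc_eq_dexp: "tri (Suc (Suc j)) = dexp j 0 + 1"
proof -
  have "2 * tri (Suc (Suc j)) = 2 * (j * (j + 3) div 2 + 1)"
    using two_tri_add[of "Suc (Suc j)"] by (simp add: algebra_simps)
  then show ?thesis
    by (simp add: dexp_def)
qed

lemma dexp_boundary_rows:
  fixes q :: complex
  assumes q: "norm q < 1"
  shows "(\<Sum>m. (-1) ^ m * q ^ dexp 0 m) + q * (\<Sum>m. (-1) ^ m * q ^ (dexp 1 m + 2 * m + 1)) = 1"
proof -
  define h where "h m = (-1) ^ m * q ^ (2 * m * (m + 1))" for m
  have "norm (h m) \<le> norm q ^ m" for m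
    using norm_power_le_norm_power[OF q, of m "2 * m * (m + 1)"] by (simp add: h_def norm_mult norm_power)
  then have "h \<longlonglongrightarrow> 0"
    by (intro summable_LIMSEQ_zero summable_geometric_dominated(2)[OF q])
  have bound: "norm ((-1) ^ m * q ^ e) \<le> norm q ^ m" if "m \<le> e" for m e
    using norm_power_le_norm_power[OF q that] by (simp add: norm_mult norm_power)
  have exponents: "m \<le> dexp 0 m" "m \<le> dexp 1 m + 2 * m + 1" for m
    using dexp_ge[of 0 m] dexp_ge[of 1 m] by simp_all
  have summable: "summable (\<lambda>m. (-1) ^ m * q ^ dexp 0 m)"
    "summable (\<lambda>m. (-1) ^ m * q ^ (dexp 1 m + 2 * m + 1))"
    by (intro summable_geometric_dominated(2)[OF q] bound exponents)+
  have "(\<Sum>m. (-1) ^ m * q ^ dexp 0 m) + q * (\<Sum>m. (-1) ^ m * q ^ (dexp 1 m + 2 * m + 1))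
      = (\<Sum>m. (-1) ^ m * q ^ dexp 0 m + q * ((-1) ^ m * q ^ (dexp 1 m + 2 * m + 1)))"
    unfolding suminf_mult[OF summable(2), symmetric]
    by (rule suminf_add[OF summable(1) summable_mult[OF summable(2)]])
  also have "\<dots> = (\<Sum>m. h m - h (Suc m))"
    by (intro suminf_cong) (simp add: h_def dexp_def algebra_simps power2_eq_square)
  also have "\<dots> = 1"
    using telescope_sums'[OF \<open>h \<longlonglongrightarrow> 0\<close>] by (simp add: h_def sums_iff)
  finally show ?thesis .
qed

lemma summable_dexp_rows:
  fixes q :: complex and e :: "nat \<Rightarrow> nat \<Rightarrow> nat"
  assumes q: "norm q < 1" and e: "\<And>n m. n + m \<le> e n m"
  shows "summable (\<lambda>m. (-1) ^ m * q ^ e n m)" "summable (\<lambda>n. \<Sum>m. (-1) ^ m * q ^ e n m)"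
proof -
  have "norm ((-1) ^ m * q ^ e n m) \<le> norm q ^ (n + m)" for n m
    using norm_power_le_norm_power[OF q e] by (simp add: norm_mult norm_power)
  note summable_rows_geometric[OF q this]
  then show "summable (\<lambda>m. (-1) ^ m * q ^ e n m)" "summable (\<lambda>n. \<Sum>m. (-1) ^ m * q ^ e n m)"
    by blast+
qed

lemma dexp_row_recurrences:
  fixes q :: complex
  assumes q: "norm q < 1"
  shows "q * (\<Sum>m. (-1) ^ m * q ^ dexp n m)
      = q ^ (dexp n 0 + 1) - (\<Sum>m. (-1) ^ m * q ^ dexp (n + 2) m)"
    and "q * (\<Sum>m. (-1) ^ m * q ^ (dexp (n + 2) m + 2 * m + 1))
      = q ^ (dexp n 0 + 1) - (\<Sum>m. (-1) ^ m * q ^ (dexp n m + 2 * m + 1))"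
proof -
  define a where "a n m = (-1) ^ m * q ^ dexp n m" for n m
  define b where "b n m = (-1) ^ m * q ^ (dexp n m + 2 * m + 1)" for n m
  have summable_a: "summable (a n)" for n
    unfolding a_def by (rule summable_dexp_rows(1)[OF q dexp_ge])
  have "n + m \<le> dexp n m + 2 * m + 1" for n m
    using dexp_ge[of n m] by simp
  then have summable_b: "summable (b n)" for n
    unfolding b_def by (rule summable_dexp_rows(1)[OF q, of "\<lambda>n m. dexp n m + 2 * m + 1"])
  have "q * a n (Suc m) = - a (n + 2) m" for m
    unfolding a_def dexp_add_2 by simp
  then have "(\<Sum>m. q * a n (Suc m)) = - suminf (a (n + 2))"
    using summable_a by (simp add: suminf_minus)
  moreover have "q * suminf (a n) = q * a n 0 + (\<Sum>m. q * a n (Suc m))"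
    unfolding suminf_mult[OF summable_a, symmetric]
    using suminf_split_head[OF summable_mult[OF summable_a]] by simp
  ultimately have "q * suminf (a n) = q ^ (dexp n 0 + 1) - suminf (a (n + 2))"
    by (simp add: a_def)
  then show "q * (\<Sum>m. (-1) ^ m * q ^ dexp n m)
      = q ^ (dexp n 0 + 1) - (\<Sum>m. (-1) ^ m * q ^ dexp (n + 2) m)"
    unfolding a_def .
  have "q * b (n + 2) m = - b n (Suc m)" for m
    unfolding b_def dexp_add_2 by (simp add: algebra_simps)
  then have "q * suminf (b (n + 2)) = - (\<Sum>m. b n (Suc m))"
    unfolding suminf_mult[OF summable_b, symmetric]
    using summable_b[of n] by (simp add: suminf_minus summable_Suc_iff)
  also have "(\<Sum>m. b n (Suc m)) = suminf (b n) - q ^ (dexp n 0 + 1)"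
    using suminf_split_head[OF summable_b] by (simp add: b_def)
  finally show "q * (\<Sum>m. (-1) ^ m * q ^ (dexp (n + 2) m + 2 * m + 1))
      = q ^ (dexp n 0 + 1) - (\<Sum>m. (-1) ^ m * q ^ (dexp n m + 2 * m + 1))"
    unfolding b_def by simp
qed

lemma double_sum_eq:
  fixes q :: complex
  assumes q: "norm q < 1"
  shows "(1 + q) * (\<Sum>n. \<Sum>m. (-1) ^ m * q ^ dexp n m * (1 + q ^ (2 * m + 1)))
    = 2 * (\<Sum>n. q ^ (dexp n 0 + 1)) + 1 + 2 * (\<Sum>m. (-1) ^ m * q ^ (2 * (m + 1) * (m + 1)))"
proof -
  define A where "A n = (\<Sum>m. (-1) ^ m * q ^ dexp n m)" for n
  define B where "B n = (\<Sum>m. (-1) ^ m * q ^ (dexp n m + 2 * m + 1))" for n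
  define H where "H = (\<Sum>n. q ^ (dexp n 0 + 1))"
  define T where "T = (\<Sum>m. (-1) ^ m * q ^ (2 * (m + 1) * (m + 1)))"
  have "n + m \<le> dexp n m + 2 * m + 1" for n m
    using dexp_ge[of n m] by simp
  note summable_a = summable_dexp_rows[OF q dexp_ge, folded A_def]
    and summable_b = summable_dexp_rows[OF q, of "\<lambda>n m. dexp n m + 2 * m + 1", OF this, folded B_def]
  have "norm (q ^ (dexp n 0 + 1)) \<le> norm q ^ n" for n
    using dexp_ge[of n 0] by (intro norm_power_le_norm_power[OF q]) simp
  note summable_H = summable_geometric_dominated(2)[OF q this]
  have "q * A n = q ^ (dexp n 0 + 1) - A (n + 2)" for n
    unfolding A_def by (rule dexp_row_recurrences(1)[OF q])
  then have sum_A: "(1 + q) * (\<Sum>n. A n) = A 0 + A 1 + H"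
    unfolding H_def by (intro suminf_forward_recurrence summable_a(2) summable_H)
  have "q * B (n + 2) = q ^ (dexp n 0 + 1) - B n" for n
    unfolding B_def by (rule dexp_row_recurrences(2)[OF q])
  then have sum_B: "(1 + q) * (\<Sum>n. B n) = q * B 0 + q * B 1 + H"
    unfolding H_def by (intro suminf_backward_recurrence summable_b(2) summable_H)
  have rows: "(\<Sum>m. (-1) ^ m * q ^ dexp n m * (1 + q ^ (2 * m + 1))) = A n + B n" for n
    unfolding A_def B_def suminf_add[OF summable_a(1) summable_b(1)]
    by (rule suminf_cong) (simp add: algebra_simps power_add)
  have "(1 + q) * (\<Sum>n. \<Sum>m. (-1) ^ m * q ^ dexp n m * (1 + q ^ (2 * m + 1)))
      = (1 + q) * (\<Sum>n. A n) + (1 + q) * (\<Sum>n. B n)"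
    unfolding rows suminf_add[OF summable_a(2) summable_b(2), symmetric] by (rule distrib_left)
  moreover have "A 1 = T" "q * B 0 = T"
    unfolding A_def B_def T_def suminf_mult[OF summable_b(1), symmetric]
    by (auto intro!: suminf_cong simp: dexp_def algebra_simps power2_eq_square)
  moreover have "A 0 + q * B 1 = 1"
    unfolding A_def B_def by (rule dexp_boundary_rows[OF q])
  ultimately show ?thesis
    unfolding sum_A sum_B H_def[symmetric] T_def[symmetric] by (simp add: algebra_simps)
qed

lemma sums_qpoch_ratio:
  fixes q Q :: complex
  assumes q: "norm q < 1" and Q: "norm Q < 1"
  shows "(\<lambda>n. Q ^ n * (qpoch q Q n / qpoch (-Q) Q n))
    sums ((2 - qpoch_inf q Q / qpoch_inf (-Q) Q) / (1 + q))"
proof -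
  define u where "u n = qpoch q Q n / qpoch (-Q) Q n" for n
  define w where "w n = u n * (1 + Q ^ n)" for n
  have nonzero: "qpoch (-Q) Q n \<noteq> 0" for n
    using Q by (intro qpoch_nonzero) auto
  have "1 + q \<noteq> 0"
    using q by (auto simp: add_eq_0_iff)
  have step: "Q ^ n * u n = (w n - w (Suc n)) / (1 + q)" for n
  proof -
    have "1 + Q * Q ^ n \<noteq> 0"
      using nonzero[of "Suc n"] by (simp add: qpoch_Suc)
    then have "u (Suc n) * (1 + Q * Q ^ n) = u n * (1 - q * Q ^ n)"
      using nonzero[of n] by (simp add: u_def qpoch_Suc)
    then show ?thesis
      using \<open>1 + q \<noteq> 0\<close> by (simp add: w_def field_simps)
  qed
  have "u \<longlonglongrightarrow> qpoch_inf q Q / qpoch_inf (-Q) Q"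
    unfolding u_def using q Q by (intro tendsto_divide qpoch_LIMSEQ) (auto simp: qpoch_inf_nonzero)
  then have "w \<longlonglongrightarrow> qpoch_inf q Q / qpoch_inf (-Q) Q * (1 + 0)"
    unfolding w_def by (intro tendsto_mult tendsto_add tendsto_const LIMSEQ_power_zero Q)
  then have "(\<lambda>n. w n - w (Suc n)) sums (w 0 - qpoch_inf q Q / qpoch_inf (-Q) Q)"
    using telescope_sums' by simp
  then show ?thesis
    unfolding u_def[symmetric] step by (intro sums_divide) (simp add: w_def u_def)
qed

lemma F_ed_od_uminus_eq:
  fixes q :: complex
  assumes q: "norm q < 1"
  shows "F_ed_od (-q) = -q * (2 * qpoch_inf (-(q^2)) (q^2) - qpoch_inf q (q^2)) / (1 + q)"
proof -
  define W where "W = qpoch_inf (-(q^2)) (q^2)"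
  have Q: "norm (q^2) < 1"
    using q by (rule norm_power2_less_1)
  have "W \<noteq> 0"
    using Q by (simp add: W_def qpoch_inf_nonzero)
  have terms: "(-q) ^ (2 * n + 1) * qpoch (-(-q)) ((-q)^2) n * qpoch_inf (-((-q) ^ (2 * n + 2))) ((-q)^2)
      = -q * W * ((q^2) ^ n * (qpoch q (q^2) n / qpoch (-(q^2)) (q^2) n))" for n
  proof -
    have powers: "(-q) ^ (2 * n + 1) = -q * (q^2) ^ n" "(-q)^2 = q^2"
      "-((-q) ^ (2 * n + 2)) = -(q^2) * (q^2) ^ n"
      by (simp_all add: power_add power_mult power2_eq_square)
    have "qpoch (-(q^2)) (q^2) n \<noteq> 0"
      using Q by (intro qpoch_nonzero) auto
    moreover have "W = qpoch (-(q^2)) (q^2) n * qpoch_inf (-(q^2) * (q^2) ^ n) (q^2)"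
      unfolding W_def by (rule qpoch_inf_split[OF Q])
    ultimately show ?thesis
      unfolding powers minus_minus by (simp add: field_simps)
  qed
  have "(\<lambda>n. -q * W * ((q^2) ^ n * (qpoch q (q^2) n / qpoch (-(q^2)) (q^2) n)))
      sums (-q * W * ((2 - qpoch_inf q (q^2) / W) / (1 + q)))"
    unfolding W_def by (rule sums_mult[OF sums_qpoch_ratio[OF q Q]])
  then have "F_ed_od (-q) = -q * W * ((2 - qpoch_inf q (q^2) / W) / (1 + q))"
    unfolding F_ed_od_def terms by (rule sums_unique[symmetric])
  then show ?thesis
    using \<open>W \<noteq> 0\<close> by (simp add: W_def field_simps)
qed

lemma double_sum_product_formula:
  fixes q :: complex
  assumes q: "norm q < 1" "q \<noteq> 0"
  shows "(1 + q) * (\<Sum>n. \<Sum>m. (-1) ^ m * q ^ (n * (n + 3) div 2 + 2 * n * m + 2 * m^2 + 2 * m) * (1 + q ^ (2 * m + 1)))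
    = 2 * (qpoch_inf (q^2) (q^2) / qpoch_inf q (q^2)) - qpoch_inf (q^2) (q^2) / qpoch_inf (-(q^2)) (q^2)"
  (is "(1 + q) * ?S = _")
proof -
  define S where "S = ?S"
  define G where "G = (\<Sum>j. q ^ tri (Suc j))"
  define H where "H = (\<Sum>n. q ^ (dexp n 0 + 1))"
  define T where "T = (\<Sum>m. (-1) ^ m * q ^ (2 * (m + 1) * (m + 1)))"
  have "norm (q ^ tri (Suc j)) \<le> norm q ^ j" for j
    using q by (intro norm_power_le_norm_power) simp_all
  note summable = summable_geometric_dominated(2)[OF q(1) this]
  have "tri (Suc 0) = 0"
    by simp
  then have H: "H = G - 1"
    using suminf_split_head[OF summable] unfolding G_def H_def tri_Suc_Suc_eq_dexp by (simp only: power_0)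
  have "(1 + q) * S = 2 * H + 1 + 2 * T"
    using double_sum_eq[OF q(1), folded H_def T_def] by (simp only: S_def dexp_def)
  also have "\<dots> = 2 * G - (1 - 2 * T)"
    unfolding H by (simp add: algebra_simps)
  finally show ?thesis
    unfolding S_def[symmetric] G_def T_def triangular_series_eq[OF q] theta_series_eq[OF q] .
qed

lemma double_sum_closed_form:
  fixes q :: complex
  assumes q: "norm q < 1" "q \<noteq> 0"
  shows "q * qpoch_inf q q * qpoch_inf (-(q^2)) (q^2) / (qpoch_inf (q^2) (q^2))^2
      * (\<Sum>n. \<Sum>m. (-1) ^ m * q ^ (n * (n + 3) div 2 + 2 * n * m + 2 * m^2 + 2 * m) * (1 + q ^ (2 * m + 1)))
    = q * (2 * qpoch_inf (-(q^2)) (q^2) - qpoch_inf q (q^2)) / (1 + q)"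
  (is "_ * ?S = _")
proof -
  define X where "X = qpoch_inf q (q^2)"
  define Y where "Y = qpoch_inf (q^2) (q^2)"
  define W where "W = qpoch_inf (-(q^2)) (q^2)"
  have "X \<noteq> 0" "Y \<noteq> 0" "W \<noteq> 0"
    using q by (simp_all add: X_def Y_def W_def qpoch_inf_nonzero norm_power2_less_1)
  have "1 + q \<noteq> 0"
    using q by (auto simp: add_eq_0_iff)
  then have "?S = (2 * (Y / X) - Y / W) / (1 + q)"
    using double_sum_product_formula[OF q, folded X_def Y_def W_def] by (simp add: field_simps)
  moreover have "qpoch_inf q q = X * Y"
    using qpoch_inf_even_odd[OF q(1), of q] by (simp add: X_def Y_def power2_eq_square)
  moreover have "X * Y * W / Y^2 * (2 * (Y / X) - Y / W) = 2 * W - X"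
    using \<open>X \<noteq> 0\<close> \<open>Y \<noteq> 0\<close> \<open>W \<noteq> 0\<close> by (simp add: field_simps power2_eq_square)
  moreover have "q * (X * Y) * W / Y^2 * ((2 * (Y / X) - Y / W) / (1 + q))
      = q * (X * Y * W / Y^2 * (2 * (Y / X) - Y / W)) / (1 + q)"
    by (simp only: divide_inverse ac_simps)
  ultimately show ?thesis
    unfolding X_def[symmetric] Y_def[symmetric] W_def[symmetric] by simp
qed

theorem mainTheorem5:
  fixes q :: complex
  assumes "norm q < 1"
  shows "F_ed_od (-q) =
    - (q * qpoch_inf q q * qpoch_inf (- (q^2)) (q^2) / (qpoch_inf (q^2) (q^2))^2) *
      (\<Sum>n. \<Sum>m. (-1) ^ m * q ^ (n*(n+3) div 2 + 2*n*m + 2*m^2 + 2*m) * (1 + q ^ (2*m+1)))"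
proof (cases "q = 0")
  case True
  then show ?thesis
    by (simp add: F_ed_od_def)
next
  case False
  have "F_ed_od (-q) = - (q * (2 * qpoch_inf (-(q^2)) (q^2) - qpoch_inf q (q^2)) / (1 + q))"
    using F_ed_od_uminus_eq[OF assms] by simp
  then show ?thesis
    unfolding double_sum_closed_form[OF assms False, symmetric] by (simp only: minus_mult_left)
qed

end
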